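(* Let $\mathbf{x}$ be a program variable of type $\{0,1\}^2$, $\mathbf{y}$ a program variable of type $\{0,1\}$, and $\mathbf{w}$ an auxiliary program variable of type $\{0,1\}^2$ distinct from $\mathbf{x},\mathbf{y}$, all contained in the fixed set $X_{\mathrm{all}}$ of program variables. Let $Z=\begin{pmatrix}1&0\\0&-1\end{pmatrix}$, $X=\begin{pmatrix}0&1\\1&0\end{pmatrix}$ (Pauli matrices). Define the programs $\mathsf{Keygen} := \mathbf{init}\ \mathbf{x};\ \mathbf{apply}\ U_K\ \mathbf{to}\ \mathbf{x};\ \mathbf{init}\ \mathbf{w};\ \mathbf{apply}\ U_0\ \mathbf{to}\ \mathbf{w};\ \mathbf{apply}\ \mathrm{CNOT}\ \mathbf{to}\ \mathbf{x}\mathbf{w};\ \mathbf{init}\ \mathbf{w};\ \mathbf{apply}\ U_0\ \mathbf{to}\ \mathbf{w}$, $\mathsf{Enc} := \mathbf{apply}\ \big(\sum_{k\in\{0,1\}^2}|k\rangle\langle k|\otimes X^{k_2}Z^{k_1}\big)\ \mathbf{to}\ \mathbf{x}\mathbf{y}$, and $\mathsf{Erase}:=\mathbf{init}\ \mathbf{x};\ \mathbf{apply}\ U_0\ \mathbf{to}\ \mathbf{x}$, where $U_K$ is an isometry on $\ell^2(\{0,1\}^2)$ with $U_K|00\rangle=\frac12\sum_{k\in\{0,1\}^2}|k\rangle$, $U_0$ is an isometry on $\ell^2(\{0,1\}^2)$ with $U_0|00\rangle=|00\rangle$, and $\mathrm{CNOT}|a\rangle|b\rangle=|a\rangle|a\oplus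 b\rangle$ (bitwise XOR). Let $\mathbf{e}$ be an entangled ghost variable of type $\{0,1\}$ and let $\mathrm{uniform}(\mathbf{y})$ denote the predicate $\mathbf{y}\mathbf{e}=_q \tfrac{1}{\sqrt2}(|00\rangle+|11\rangle)$. Then the Hoare judgment $\{\top\}\ \mathsf{Keygen};\mathsf{Enc};\mathsf{Erase}\ \{\mathrm{uniform}(\mathbf{y})\}$ holds, where $\top=\ell^2[X_{\mathrm{all}}]$; i.e., for every mixed memory $\rho$ over $X_{\mathrm{all}}$, $[\![\mathsf{Keygen};\mathsf{Enc};\mathsf{Erase}]\!](\rho)\models \mathrm{uniform}(\mathbf{y})$.
   Context: Variables: each variable has a type (a set containing a distinguished element $0$). Variables are of three disjoint kinds: program variables, entangled ghost variables, unentangled ghost variables. For a set $V$ of variables, $\ell^2[V]$ is the Hilbert space with orthonormal basis $|m\rangle$ indexed by assignments $m$ on $V$ (functions with $m(v)$ in the type of $v$); its elements are quantum memories over $V$; $\ell^2[V\cup W]\cong\ell^2[V]\otimes\ell^2[W]$ for disjoint $V,W$, and a list of variables of type $T$ has $\ell^2[V]$ identified with $\ell^2(T)$. A mixed memory over $V$ is a positive trace-class operator on $\ell^2[V]$; $\mathrm{tr}_W$ is the partial trace over $W$. For an operator $M$ on $\ell^2[X]$ with $X\subseteq V$, "$M$ on $X$" denotes $M\otimes \mathrm{id}_{V\setminus X}$. A mixed memory over $V\cup W$ is $(V,W)$-separable if it is a convergent sum $\sum_i\rho_i\otimes\rho_i'$ of mixed memories over $V$ and $W$. $\mathrm{supp}\,\rho$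 is the closed span of the $\psi_i$ in any decomposition $\rho=\sum_i|\psi_i\rangle\langle\psi_i|$. A predicate over $V$ is a closed subspace of $\ell^2[V]$; for $X\subseteq V$, $X=_q\psi$ denotes $\mathrm{span}\{\psi\}\otimes\ell^2[V\setminus X]$; predicates $A$ over $V$ and $A'$ over $W$ are identified if $A\otimes \ell^2[W\setminus V]=A'\otimes\ell^2[V\setminus W]$. Satisfaction: for program variables $X$, entangled ghosts $E$, unentangled ghosts $U$, and a predicate $A$ over $X\cup E\cup U$, a mixed memory $\rho$ over $X$ satisfies $A$ ($\rho\models A$) iff there is an $(X\cup E,U)$-separable mixed memory $\rho^\circ$ over $X\cup E\cup U$ with $\mathrm{supp}\,\rho^\circ\subseteq A$ and $\mathrm{tr}_{E\cup U}\rho^\circ=\rho$. Programs: $c::=\mathbf{apply}\ U\ \mathbf{to}\ X\mid \mathbf{init}\ x\mid \mathbf{if}\ y\ \mathbf{then}\ c\ \mathbf{else}\ d\mid \mathbf{while}\ y\ \mathbf{do}\ c\mid c;d\mid \mathbf{skip}$ ($X$ a list of program variables, $U$ an isometry on $\ell^2[X]$, $y$ of type $\{0,1\}$). With $X_{\mathrm{all}}$ a fixed set of program variables containing all program variables of the programs considered, the semantics on mixed memories over $X_{\mathrm{all}}$ is: $[\![\mathbf{skip}]\!]=\mathrm{id}$, $[\![c;d]\!]=[\![d]\!]\circ[\![c]\!]$, $[\![\mathbf{apply}\ U\ \mathbf{to}\ X]\!](\rho)=(U\text{ on }X)\rho(U\text{ on }X)^*$, $[\![\mathbf{init}\ x]\!](\rho)=\mathrm{tr}_x\rho\otimes|0\rangle\langle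 0|_x$, $[\![\mathbf{if}\ y\ \mathbf{then}\ c\ \mathbf{else}\ d]\!](\rho)=[\![c]\!](P_1\rho P_1)+[\![d]\!](P_0\rho P_0)$ with $P_i=|i\rangle\langle i|$ on $y$, and $[\![\mathbf{while}\ y\ \mathbf{do}\ c]\!](\rho)=\sum_{n\ge0}P_0\big(([\![c]\!]\circ(\sigma\mapsto P_1\sigma P_1))^n(\rho)\big)P_0$. For predicates $A$ (over $X_{\mathrm{all}}$ and some ghosts) and $B$ (over $X_{\mathrm{all}}$ and possibly other ghosts), $\{A\}c\{B\}$ means: for all mixed memories $\rho$ over $X_{\mathrm{all}}$ with $\rho\models A$, $[\![c]\!](\rho)\models B$. *)

theory Defs
  imports "HOL-Analysis.Analysis"
begin

text \<open>A vector over a basis type 'b (the assignments of a set of variables) is a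
function 'b => complex; ell^2 membership is square-summability. An operator
(mixed memory) is represented by its matrix entries  rho m m' = <m|rho|m'>.\<close>

type_synonym 'b qvec = "'b \<Rightarrow> complex"
type_synonym 'b qmat = "'b \<Rightarrow> 'b \<Rightarrow> complex"

definition is_l2 :: "'b qvec \<Rightarrow> bool" where
  "is_l2 \<psi> \<longleftrightarrow> (\<lambda>m. (cmod (\<psi> m))\<^sup>2) summable_on UNIV"

definition l2norm_sq :: "'b qvec \<Rightarrow> real" where
  "l2norm_sq \<psi> = (\<Sum>\<^sub>\<infinity>m. (cmod (\<psi> m))\<^sup>2)"

text \<open>rho = sum_i |psi_i><psi_i| (trace-norm convergent): exactly the positive
trace-class operators.\<close>
definition mixed_decomp :: "(nat \<Rightarrow> 'b qvec) \<Rightarrow> 'b qmat \<Rightarrow> bool" where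
  "mixed_decomp \<psi> \<rho> \<longleftrightarrow> (\<forall>i. is_l2 (\<psi> i)) \<and> summable (\<lambda>i. l2norm_sq (\<psi> i)) \<and>
     (\<forall>m m'. (\<lambda>i. \<psi> i m * cnj (\<psi> i m')) sums \<rho> m m')"

definition mixed_memory :: "'b qmat \<Rightarrow> bool" where
  "mixed_memory \<rho> \<longleftrightarrow> (\<exists>\<psi>. mixed_decomp \<psi> \<rho>)"

definition cspan :: "'b qvec set \<Rightarrow> 'b qvec set" where
  "cspan S = {v. \<exists>F c. finite F \<and> F \<subseteq> S \<and> v = (\<lambda>m. \<Sum>s\<in>F. c s * s m)}"

definition l2_closure :: "'b qvec set \<Rightarrow> 'b qvec set" where
  "l2_closure S = {\<phi>. is_l2 \<phi> \<and> (\<forall>e>0. \<exists>s\<in>S. l2norm_sq (\<lambda>m. \<phi> m - s m) < e)}"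

text \<open>supp rho: closed span of the psi_i of a decomposition (independent of the choice).\<close>
definition qsupp :: "'b qmat \<Rightarrow> 'b qvec set" where
  "qsupp \<rho> = l2_closure (cspan (range (SOME \<psi>. mixed_decomp \<psi> \<rho>)))"

definition ptrace :: "('a \<times> 'c) qmat \<Rightarrow> 'a qmat" where
  "ptrace \<rho> = (\<lambda>a a'. \<Sum>\<^sub>\<infinity>c. \<rho> (a, c) (a', c))"

definition tensor_mat :: "'a qmat \<Rightarrow> 'c qmat \<Rightarrow> ('a \<times> 'c) qmat" where
  "tensor_mat \<rho> \<sigma> = (\<lambda>(a, c) (a', c'). \<rho> a a' * \<sigma> c c')"

definition separable_mm :: "('a \<times> 'c) qmat \<Rightarrow> bool" where
  "separable_mm \<rho> \<longleftrightarrow> (\<exists>(\<rho>1 :: nat \<Rightarrow> 'a qmat) (\<rho>2 :: nat \<Rightarrow> 'c qmat).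
      (\<forall>i. mixed_memory (\<rho>1 i) \<and> mixed_memory (\<rho>2 i)) \<and>
      (\<forall>m m'. (\<lambda>i. tensor_mat (\<rho>1 i) (\<rho>2 i) m m') sums \<rho> m m'))"

text \<open>Satisfaction: program variables 'x, entangled ghosts 'e, unentangled ghosts 'u.\<close>
definition sat :: "'x qmat \<Rightarrow> ((('x \<times> 'e) \<times> 'u) qvec) set \<Rightarrow> bool" where
  "sat \<rho> A \<longleftrightarrow> (\<exists>\<rho>o :: (('x \<times> 'e) \<times> 'u) qmat.
      mixed_memory \<rho>o \<and> separable_mm \<rho>o \<and> qsupp \<rho>o \<subseteq> A \<and> ptrace (ptrace \<rho>o) = \<rho>)"

text \<open>A register (list of program variables) of finite type 'a is given by a getter
and setter on the basis of ell^2[X_all]. (U on X) rho (U on X)^* :\<close>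
definition apply_reg :: "('m \<Rightarrow> 'a::finite) \<Rightarrow> ('a \<Rightarrow> 'm \<Rightarrow> 'm) \<Rightarrow> 'a qmat \<Rightarrow> 'm qmat \<Rightarrow> 'm qmat" where
  "apply_reg g s U \<rho> = (\<lambda>m m'. \<Sum>a\<in>UNIV. \<Sum>a'\<in>UNIV. U (g m) a * \<rho> (s a m) (s a' m') * cnj (U (g m') a'))"

text \<open>tr_x rho tensor |0><0|_x :\<close>
definition init_reg :: "('m \<Rightarrow> 'a::finite) \<Rightarrow> ('a \<Rightarrow> 'm \<Rightarrow> 'm) \<Rightarrow> 'a \<Rightarrow> 'm qmat \<Rightarrow> 'm qmat" where
  "init_reg g s z \<rho> = (\<lambda>m m'. if g m = z \<and> g m' = z then (\<Sum>a\<in>UNIV. \<rho> (s a m) (s a m')) else 0)"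

definition seqc :: "('s \<Rightarrow> 's) \<Rightarrow> ('s \<Rightarrow> 's) \<Rightarrow> 's \<Rightarrow> 's" (infixl ";;" 60) where
  "(c ;; d) = d \<circ> c"

definition isometry_mat :: "('a::finite) qmat \<Rightarrow> bool" where
  "isometry_mat U \<longleftrightarrow> (\<forall>b b'. (\<Sum>a\<in>UNIV. cnj (U a b) * U a b') = (if b = b' then 1 else 0))"

text \<open>ell^2[X_all] = ell^2[x] (x) ell^2[y] (x) ell^2[w] (x) ell^2[rest]; the basis of the
remaining variables of X_all is the arbitrary type 'r. {0,1} = bool (0 = False).\<close>
type_synonym 'r mem = "(bool \<times> bool) \<times> bool \<times> (bool \<times> bool) \<times> 'r"

definition get_x :: "'r mem \<Rightarrow> bool \<times> bool" where "get_x m = (case m of (x, y, w, r) \<Rightarrow> x)"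
definition set_x :: "bool \<times> bool \<Rightarrow> 'r mem \<Rightarrow> 'r mem" where "set_x a m = (case m of (x, y, w, r) \<Rightarrow> (a, y, w, r))"
definition get_w :: "'r mem \<Rightarrow> bool \<times> bool" where "get_w m = (case m of (x, y, w, r) \<Rightarrow> w)"
definition set_w :: "bool \<times> bool \<Rightarrow> 'r mem \<Rightarrow> 'r mem" where "set_w a m = (case m of (x, y, w, r) \<Rightarrow> (x, y, a, r))"
definition get_xw :: "'r mem \<Rightarrow> (bool \<times> bool) \<times> (bool \<times> bool)" where "get_xw m = (case m of (x, y, w, r) \<Rightarrow> (x, w))"
definition set_xw :: "(bool \<times> bool) \<times> (bool \<times> bool) \<Rightarrow> 'r mem \<Rightarrow> 'r mem" where
  "set_xw a m = (case m of (x, y, w, r) \<Rightarrow> (fst a, y, snd a, r))"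
definition get_xy :: "'r mem \<Rightarrow> (bool \<times> bool) \<times> bool" where "get_xy m = (case m of (x, y, w, r) \<Rightarrow> (x, y))"
definition set_xy :: "(bool \<times> bool) \<times> bool \<Rightarrow> 'r mem \<Rightarrow> 'r mem" where
  "set_xy a m = (case m of (x, y, w, r) \<Rightarrow> (fst a, snd a, w, r))"

definition zero2 :: "bool \<times> bool" where "zero2 = (False, False)"

definition mat_mul :: "('a::finite) qmat \<Rightarrow> 'a qmat \<Rightarrow> 'a qmat" where
  "mat_mul A B = (\<lambda>i j. \<Sum>k\<in>UNIV. A i k * B k j)"
definition id_mat :: "'a qmat" where "id_mat = (\<lambda>i j. if i = j then 1 else 0)"
definition bpow :: "'a qmat \<Rightarrow> bool \<Rightarrow> 'a qmat" where "bpow M k = (if k then M else id_mat)"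

definition pauliX :: "bool qmat" where "pauliX = (\<lambda>b b'. if b \<noteq> b' then 1 else 0)"
definition pauliZ :: "bool qmat" where "pauliZ = (\<lambda>b b'. if b = b' then (if b then -1 else 1) else 0)"

definition enc_U :: "((bool \<times> bool) \<times> bool) qmat" where
  "enc_U = (\<lambda>(k, b) (k', b'). if k = k' then mat_mul (bpow pauliX (snd k)) (bpow pauliZ (fst k)) b b' else 0)"

definition xor2 :: "bool \<times> bool \<Rightarrow> bool \<times> bool \<Rightarrow> bool \<times> bool" where
  "xor2 a b = (fst a \<noteq> fst b, snd a \<noteq> snd b)"

definition cnot2 :: "((bool \<times> bool) \<times> (bool \<times> bool)) qmat" where
  "cnot2 = (\<lambda>(a, b) (a', b'). if a = a' \<and> b = xor2 a' b' then 1 else 0)"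

definition Keygen :: "(bool \<times> bool) qmat \<Rightarrow> (bool \<times> bool) qmat \<Rightarrow> 'r mem qmat \<Rightarrow> 'r mem qmat" where
  "Keygen UK U0 = init_reg get_x set_x zero2 ;; apply_reg get_x set_x UK ;;
     init_reg get_w set_w zero2 ;; apply_reg get_w set_w U0 ;; apply_reg get_xw set_xw cnot2 ;;
     init_reg get_w set_w zero2 ;; apply_reg get_w set_w U0"

definition Enc :: "'r mem qmat \<Rightarrow> 'r mem qmat" where
  "Enc = apply_reg get_xy set_xy enc_U"

definition Erase :: "(bool \<times> bool) qmat \<Rightarrow> 'r mem qmat \<Rightarrow> 'r mem qmat" where
  "Erase U0 = init_reg get_x set_x zero2 ;; apply_reg get_x set_x U0"

text \<open>uniform(y):  y e =_q (|00>+|11>)/sqrt 2, i.e. span{beta} (x) ell^2[rest], as a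
predicate over X_all, the entangled ghost e (bool) and no unentangled ghosts (unit).
Since span{beta} is one-dimensional, span{beta} (x) ell^2[rest] = {beta (x) chi}.\<close>
definition bell :: "bool \<Rightarrow> bool \<Rightarrow> complex" where
  "bell y e = (if y = e then complex_of_real (1 / sqrt 2) else 0)"

definition uniform_y :: "((('r mem \<times> bool) \<times> unit) qvec) set" where
  "uniform_y = {\<phi>. \<exists>(ch :: ((bool \<times> bool) \<times> (bool \<times> bool) \<times> 'r \<times> unit) qvec). is_l2 ch \<and>
      (\<forall>x y w r e u. \<phi> (((x, y, w, r), e), u) = bell y e * ch (x, w, r, u))}"

end

theory Submission
  imports Defs
begin

text \<open>After Keygen the key register x holds a uniformly distributed key which, having been copied
  into w by the CNOT, is classical; w is reset afterwards. Encrypting y with the Pauli operator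
  selected by the key and then erasing the key averages over all four Pauli operators (the Pauli
  twirl): y ends up maximally mixed, x and w end up in |00>, and the remaining variables keep their
  reduced state. The maximally mixed qubit is the reduced state of the Bell state on y and the
  ghost e, so the output is the partial trace of an extension in which y and e carry this Bell
  state. Every vector in the support of the extension vanishes where y and e differ and takes equal
  values at y = e = 0 and y = e = 1; these coordinate relations are read off from the entries of the
  extension, are preserved by linear combinations and l2-limits, and characterise uniform(y).\<close>

section \<open>Registers and the semantics of the program\<close>

definition valid_register :: "('m \<Rightarrow> 'a) \<Rightarrow> ('a \<Rightarrow> 'm \<Rightarrow> 'm) \<Rightarrow> bool" where
  "valid_register g s \<longleftrightarrow> (\<forall>a m. g (s a m) = a) \<and> (\<forall>a b m. s a (s b m) = s a m) \<and> (\<forall>m. s (g m) m = m)"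

definition in_basis_state :: "('m \<Rightarrow> 'a) \<Rightarrow> 'a \<Rightarrow> 'm qmat \<Rightarrow> bool" where
  "in_basis_state g z \<sigma> \<longleftrightarrow> (\<forall>m m'. \<sigma> m m' \<noteq> 0 \<longrightarrow> g m = z \<and> g m' = z)"

lemma sum_UNIV_single:
  fixes f :: "'a::finite \<Rightarrow> 'b::comm_monoid_add"
  assumes "\<And>a. a \<noteq> z \<Longrightarrow> f a = 0"
  shows "(\<Sum>a\<in>UNIV. f a) = f z"
  using assms by (subst sum.remove[of UNIV z]) (auto intro: sum.neutral)

lemma init_reg_in_basis_state: "in_basis_state g z (init_reg g s z \<sigma>)"
  by (simp add: in_basis_state_def init_reg_def)

lemma apply_reg_in_basis_state:
  assumes "valid_register g s" and "in_basis_state g z \<sigma>"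
  shows "apply_reg g s U \<sigma> m m' = U (g m) z * \<sigma> (s z m) (s z m') * cnj (U (g m') z)"
proof -
  have vanish: "\<sigma> (s a m) (s a' m') = 0" if "a \<noteq> z \<or> a' \<noteq> z" for a a'
    using assms that unfolding valid_register_def in_basis_state_def by metis
  show ?thesis
    unfolding apply_reg_def
    by (subst sum_UNIV_single[where z=z], simp add: vanish)+ (rule refl)
qed

lemma apply_reg_init_reg_fixed:
  assumes reg: "valid_register g s" and U: "\<And>k. U k z = (if k = z then 1 else 0)"
  shows "apply_reg g s U (init_reg g s z \<sigma>) = init_reg g s z \<sigma>"
proof (intro ext)
  fix m m'
  note apply_init = apply_reg_in_basis_state[OF reg init_reg_in_basis_state]
  show "apply_reg g s U (init_reg g s z \<sigma>) m m' = init_reg g s z \<sigma> m m'"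
  proof (cases "g m = z \<and> g m' = z")
    case True
    then have "s z m = m" "s z m' = m'"
      using reg unfolding valid_register_def by metis+
    then show ?thesis using True by (simp add: apply_init U)
  next
    case False
    then show ?thesis unfolding apply_init by (auto simp: U init_reg_def)
  qed
qed

lemma get_set_simps [simp]:
  "get_x (x, y, w, r) = x" "set_x a (x, y, w, r) = (a, y, w, r)"
  "get_w (x, y, w, r) = w" "set_w a (x, y, w, r) = (x, y, a, r)"
  "get_xw (x, y, w, r) = (x, w)" "set_xw p (x, y, w, r) = (fst p, y, snd p, r)"
  "get_xy (x, y, w, r) = (x, y)" "set_xy q (x, y, w, r) = (fst q, snd q, w, r)"
  by (simp_all add: get_x_def set_x_def get_w_def set_w_def get_xw_def set_xw_def get_xy_def set_xy_def)

lemma valid_register_x: "valid_register get_x set_x"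
  and valid_register_w: "valid_register get_w set_w"
  by (auto simp: valid_register_def get_x_def set_x_def get_w_def set_w_def split: prod.splits)

lemma sum_UNIV_prod:
  "(\<Sum>p\<in>(UNIV :: ('a::finite \<times> 'b::finite) set). f p) = (\<Sum>a\<in>UNIV. \<Sum>b\<in>UNIV. f (a, b))"
  by (simp add: sum.cartesian_product flip: UNIV_Times_UNIV)

lemma sum_UNIV_bool: "(\<Sum>a\<in>UNIV. f a) = f False + f True"
  by (simp add: UNIV_bool add.commute)

definition trace_out_xw :: "'r mem qmat \<Rightarrow> bool \<Rightarrow> 'r \<Rightarrow> bool \<Rightarrow> 'r \<Rightarrow> complex" where
  "trace_out_xw \<rho> y r y' r' = (\<Sum>b\<in>UNIV. \<Sum>a\<in>UNIV. \<rho> (a, y, b, r) (a, y', b, r'))"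

definition trace_out_xyw :: "'r mem qmat \<Rightarrow> 'r qmat" where
  "trace_out_xyw \<rho> r r' = (\<Sum>y\<in>UNIV. trace_out_xw \<rho> y r y r')"

lemma apply_cnot2:
  "apply_reg get_xw set_xw cnot2 \<sigma> (x, y, w, r) (x', y', w', r') = \<sigma> (x, y, xor2 x w, r) (x', y', xor2 x' w', r')"
proof -
  have cnot2_row: "cnot2 (a, b) p = (if p = (a, xor2 a b) then 1 else 0)" for a b p
    by (cases p; cases a; cases b) (auto simp: cnot2_def xor2_def)
  have "(\<Sum>p\<in>UNIV. cnot2 (a, b) p * f p) = f (a, xor2 a b)"
    and "(\<Sum>p\<in>UNIV. f p * cnj (cnot2 (a, b) p)) = f (a, xor2 a b)" for a b and f :: "_ \<Rightarrow> complex"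
    by (subst sum_UNIV_single[where z="(a, xor2 a b)"], simp_all add: cnot2_row)+
  note row_sums = this
  show ?thesis
    by (simp add: apply_reg_def row_sums)
qed

lemma keygen_output:
  assumes UK: "\<And>k. UK k zero2 = 1/2" and U0: "\<And>k. U0 k zero2 = (if k = zero2 then 1 else 0)"
  shows "Keygen UK U0 \<rho> = (\<lambda>(x, y, w, r) (x', y', w', r').
    if w = zero2 \<and> w' = zero2 \<and> x = x' then 1/4 * trace_out_xw \<rho> y r y' r' else 0)"
proof -
  define \<kappa> where "\<kappa> = apply_reg get_x set_x UK (init_reg get_x set_x zero2 \<rho>)"
  define \<sigma> where "\<sigma> = init_reg get_w set_w zero2 \<kappa>"
  define \<tau> where "\<tau> = init_reg get_w set_w zero2 (apply_reg get_xw set_xw cnot2 \<sigma>)"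
  have \<kappa>: "\<kappa> (x, y, w, r) (x', y', w', r') =
    1/4 * (\<Sum>a\<in>UNIV. \<rho> (a, y, w, r) (a, y', w', r'))" for x y w r x' y' w' r'
    unfolding \<kappa>_def apply_reg_in_basis_state[OF valid_register_x init_reg_in_basis_state]
    by (simp add: UK init_reg_def)
  have \<sigma>: "\<sigma> (x, y, w, r) (x', y', w', r') =
    (if w = zero2 \<and> w' = zero2 then 1/4 * trace_out_xw \<rho> y r y' r' else 0)" for x y w r x' y' w' r'
    by (simp add: \<sigma>_def init_reg_def \<kappa> trace_out_xw_def sum_distrib_left)
  have xor2_zero2: "xor2 a b = zero2 \<longleftrightarrow> b = a" for a b
    by (cases a; cases b) (auto simp: xor2_def zero2_def)
  have "\<tau> (x, y, w, r) (x', y', w', r') =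
    (if w = zero2 \<and> w' = zero2 \<and> x = x' then 1/4 * trace_out_xw \<rho> y r y' r' else 0)" for x y w r x' y' w' r'
    by (simp add: \<tau>_def init_reg_def apply_cnot2 \<sigma> xor2_zero2 sum_UNIV_single[where z=x])
  then have \<tau>: "\<tau> = (\<lambda>(x, y, w, r) (x', y', w', r').
    if w = zero2 \<and> w' = zero2 \<and> x = x' then 1/4 * trace_out_xw \<rho> y r y' r' else 0)"
    by (intro ext) auto
  have "Keygen UK U0 \<rho> = apply_reg get_w set_w U0 \<tau>"
    by (simp add: Keygen_def seqc_def \<kappa>_def \<sigma>_def \<tau>_def apply_reg_init_reg_fixed[OF valid_register_w] U0)
  also have "\<dots> = \<tau>"
    by (simp add: \<tau>_def apply_reg_init_reg_fixed[OF valid_register_w] U0)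
  finally show ?thesis by (simp only: \<tau>)
qed

definition pauli :: "bool \<times> bool \<Rightarrow> bool qmat" where
  "pauli k = mat_mul (bpow pauliX (snd k)) (bpow pauliZ (fst k))"

lemma pauli_apply: "pauli k y b = (if y = (b \<noteq> snd k) then (if fst k \<and> b then -1 else 1) else 0)"
  by (cases k; cases y; cases b)
    (auto simp: pauli_def mat_mul_def bpow_def pauliX_def pauliZ_def id_mat_def sum_UNIV_bool)

lemma pauli_twirl:
  "(\<Sum>k\<in>UNIV. \<Sum>b\<in>UNIV. \<Sum>b'\<in>UNIV. pauli k y b * T b b' * cnj (pauli k y' b')) =
    (if y = y' then 2 * (T False False + T True True) else 0)"
  by (cases y; cases y') (simp_all add: sum_UNIV_prod sum_UNIV_bool pauli_apply)

lemma apply_Enc: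
  "Enc \<sigma> (x, y, w, r) (x', y', w', r') =
    (\<Sum>b\<in>UNIV. \<Sum>b'\<in>UNIV. pauli x y b * \<sigma> (x, b, w, r) (x', b', w', r') * cnj (pauli x' y' b'))"
proof -
  have enc_U_row: "enc_U (x, y) (k, b) = (if k = x then pauli x y b else 0)" for x y k b
    by (simp add: enc_U_def pauli_def)
  have "(\<Sum>p\<in>UNIV. enc_U (x, y) p * f p) = (\<Sum>b\<in>UNIV. pauli x y b * f (x, b))"
    and "(\<Sum>p\<in>UNIV. f p * cnj (enc_U (x, y) p)) = (\<Sum>b\<in>UNIV. f (x, b) * cnj (pauli x y b))"
    for x y and f :: "_ \<Rightarrow> complex"
    by (subst sum_UNIV_prod, subst sum_UNIV_single[where z=x], simp_all add: enc_U_row)+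
  note row_sums = this
  show ?thesis
    unfolding Enc_def apply_reg_def get_set_simps row_sums
    by (subst sum.swap) (simp add: row_sums sum_distrib_left mult.assoc, subst sum.swap, rule refl)
qed

lemma program_output:
  assumes UK: "\<And>k. UK k zero2 = 1/2" and U0: "\<And>k. U0 k zero2 = (if k = zero2 then 1 else 0)"
  shows "(Keygen UK U0 ;; Enc ;; Erase U0) \<rho> = (\<lambda>(x, y, w, r) (x', y', w', r').
    if x = zero2 \<and> x' = zero2 \<and> w = zero2 \<and> w' = zero2 \<and> y = y' then 1/2 * trace_out_xyw \<rho> r r' else 0)"
proof -
  define \<sigma> where "\<sigma> = init_reg get_x set_x zero2 (Enc (Keygen UK U0 \<rho>))"
  have "\<sigma> (x, y, w, r) (x', y', w', r') = (if x = zero2 \<and> x' = zero2 \<and> w = zero2 \<and> w' = zero2 then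
      1/4 * (\<Sum>k\<in>UNIV. \<Sum>b\<in>UNIV. \<Sum>b'\<in>UNIV. pauli k y b * trace_out_xw \<rho> b r b' r' * cnj (pauli k y' b'))
    else 0)" for x y w r x' y' w' r'
    by (auto simp: \<sigma>_def init_reg_def apply_Enc keygen_output[of UK U0, OF UK U0] sum_distrib_left)
  also have "\<dots> x y w r x' y' w' r' =
    (if x = zero2 \<and> x' = zero2 \<and> w = zero2 \<and> w' = zero2 \<and> y = y' then 1/2 * trace_out_xyw \<rho> r r' else 0)"
    for x y w r x' y' w' r'
    by (simp only: pauli_twirl) (simp add: trace_out_xyw_def sum_UNIV_bool)
  finally have "\<sigma> = (\<lambda>(x, y, w, r) (x', y', w', r').
    if x = zero2 \<and> x' = zero2 \<and> w = zero2 \<and> w' = zero2 \<and> y = y' then 1/2 * trace_out_xyw \<rho> r r' else 0)"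
    by (intro ext) (simp split: prod.split)
  moreover have "(Keygen UK U0 ;; Enc ;; Erase U0) \<rho> = \<sigma>"
    by (simp add: Erase_def seqc_def \<sigma>_def apply_reg_init_reg_fixed[OF valid_register_x] U0)
  ultimately show ?thesis by simp
qed

section \<open>Square-summable vectors and mixed memories\<close>

lemma l2norm_sq_nonneg: "0 \<le> l2norm_sq \<psi>"
  unfolding l2norm_sq_def by (rule infsum_nonneg) simp

lemma is_l2_add:
  assumes "is_l2 f" and "is_l2 g"
  shows "is_l2 (\<lambda>m. f m + g m)"
  unfolding is_l2_def
proof (rule summable_on_comparison_test)
  show "(\<lambda>m. 2 * (cmod (f m))\<^sup>2 + 2 * (cmod (g m))\<^sup>2) summable_on UNIV"
    using assms unfolding is_l2_def by (intro summable_on_add summable_on_cmult_right)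
  have "(cmod (a + b))\<^sup>2 \<le> 2 * (cmod a)\<^sup>2 + 2 * (cmod b)\<^sup>2" for a b :: complex
  proof -
    have "(cmod (a + b))\<^sup>2 \<le> (cmod a + cmod b)\<^sup>2"
      by (simp add: norm_triangle_ineq power_mono)
    also have "\<dots> \<le> 2 * (cmod a)\<^sup>2 + 2 * (cmod b)\<^sup>2"
      using sum_squares_bound[of "cmod a" "cmod b"] by (simp add: power2_sum)
    finally show ?thesis .
  qed
  then show "(cmod (f m + g m))\<^sup>2 \<le> 2 * (cmod (f m))\<^sup>2 + 2 * (cmod (g m))\<^sup>2" for m .
qed simp

lemma is_l2_scale: "is_l2 f \<Longrightarrow> is_l2 (\<lambda>m. c * f m)"
  unfolding is_l2_def by (simp add: norm_mult power_mult_distrib summable_on_cmult_right)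

lemma is_l2_diff: "is_l2 f \<Longrightarrow> is_l2 g \<Longrightarrow> is_l2 (\<lambda>m. f m - g m)"
  using is_l2_add[of f "\<lambda>m. (-1) * g m"] is_l2_scale[of g "-1"] by simp

lemma is_l2_sum: "finite F \<Longrightarrow> (\<And>s. s \<in> F \<Longrightarrow> is_l2 s) \<Longrightarrow> is_l2 (\<lambda>m. \<Sum>s\<in>F. c s * s m)"
proof (induction F rule: finite_induct)
  case empty
  then show ?case by (simp add: is_l2_def)
next
  case (insert s F)
  then show ?case by (simp add: is_l2_add is_l2_scale)
qed

lemma is_l2_finite: "is_l2 (\<psi> :: 'a::finite qvec)"
  by (simp add: is_l2_def)

lemma l2norm_sq_ge_coord: "is_l2 \<psi> \<Longrightarrow> (cmod (\<psi> m))\<^sup>2 \<le> l2norm_sq \<psi>"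
  unfolding l2norm_sq_def is_l2_def
  using infsum_mono_neutral[of "\<lambda>m. (cmod (\<psi> m))\<^sup>2" "{m}" "\<lambda>m. (cmod (\<psi> m))\<^sup>2" UNIV] by simp

lemma is_l2_comp_inj:
  assumes "is_l2 \<psi>" and "inj g"
  shows "is_l2 (\<psi> \<circ> g)" and "l2norm_sq (\<psi> \<circ> g) \<le> l2norm_sq \<psi>"
proof -
  have summable: "(\<lambda>m. (cmod (\<psi> m))\<^sup>2) summable_on range g"
    using assms(1) unfolding is_l2_def by (rule summable_on_subset) simp
  then show "is_l2 (\<psi> \<circ> g)"
    using summable_on_reindex[OF assms(2), of "\<lambda>m. (cmod (\<psi> m))\<^sup>2"] by (simp add: is_l2_def comp_def)
  have "l2norm_sq (\<psi> \<circ> g) = (\<Sum>\<^sub>\<infinity>m\<in>range g. (cmod (\<psi> m))\<^sup>2)"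
    using infsum_reindex[OF assms(2), of "\<lambda>m. (cmod (\<psi> m))\<^sup>2"] by (simp add: l2norm_sq_def comp_def)
  also have "\<dots> \<le> l2norm_sq \<psi>"
    unfolding l2norm_sq_def
    using summable assms(1) by (intro infsum_mono_neutral) (auto simp: is_l2_def)
  finally show "l2norm_sq (\<psi> \<circ> g) \<le> l2norm_sq \<psi>" .
qed

lemma mixed_memory_zero: "mixed_memory (\<lambda>_ _. 0)"
  unfolding mixed_memory_def mixed_decomp_def
  by (rule exI[of _ "\<lambda>_ _. 0"]) (simp add: is_l2_def l2norm_sq_def)

lemma mixed_memory_proj:
  assumes "is_l2 v"
  shows "mixed_memory (\<lambda>m m'. v m * cnj (v m'))"
proof -
  define \<psi> :: "nat \<Rightarrow> _" where "\<psi> i = (if i = 0 then v else (\<lambda>_. 0))" for i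
  have "(\<lambda>i. l2norm_sq (\<psi> i)) sums l2norm_sq v"
    using sums_finite[of "{0}" "\<lambda>i. l2norm_sq (\<psi> i)"] by (simp add: \<psi>_def l2norm_sq_def)
  moreover have "(\<lambda>i. \<psi> i m * cnj (\<psi> i m')) sums (v m * cnj (v m'))" for m m'
    using sums_finite[of "{0}" "\<lambda>i. \<psi> i m * cnj (\<psi> i m')"] by (simp add: \<psi>_def)
  moreover have "is_l2 (\<psi> i)" for i
    using assms by (simp add: \<psi>_def is_l2_def)
  ultimately have "mixed_decomp \<psi> (\<lambda>m m'. v m * cnj (v m'))"
    unfolding mixed_decomp_def by (blast intro: sums_summable)
  then show ?thesis by (auto simp: mixed_memory_def)
qed

lemma mixed_memory_pullback:
  assumes "mixed_memory \<rho>" and "inj g"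
  shows "mixed_memory (\<lambda>p p'. \<rho> (g p) (g p'))"
proof -
  obtain \<psi> where l2: "\<And>i. is_l2 (\<psi> i)" and summable: "summable (\<lambda>i. l2norm_sq (\<psi> i))"
    and sums: "\<And>m m'. (\<lambda>i. \<psi> i m * cnj (\<psi> i m')) sums \<rho> m m'"
    using assms(1) unfolding mixed_memory_def mixed_decomp_def by blast
  have "summable (\<lambda>i. l2norm_sq (\<psi> i \<circ> g))"
  proof (rule summable_comparison_test[OF _ summable])
    show "\<exists>N. \<forall>i\<ge>N. norm (l2norm_sq (\<psi> i \<circ> g)) \<le> l2norm_sq (\<psi> i)"
      using is_l2_comp_inj(2)[OF l2 assms(2)] by (simp add: l2norm_sq_nonneg)
  qed
  then have "mixed_decomp (\<lambda>i. \<psi> i \<circ> g) (\<lambda>p p'. \<rho> (g p) (g p'))"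
    unfolding mixed_decomp_def comp_def using is_l2_comp_inj(1)[OF l2 assms(2)] sums
    by (simp add: comp_def)
  then show ?thesis
    unfolding mixed_memory_def by blast
qed

lemma sums_interleave:
  fixes f g :: "nat \<Rightarrow> 'a::real_normed_vector"
  assumes "f sums a" and "g sums b"
  shows "(\<lambda>n. if even n then f (n div 2) else g (n div 2)) sums (a + b)"
proof -
  define f' where "f' n = (if even n then f (n div 2) else 0)" for n
  define g' where "g' n = (if even n then 0 else g (n div 2))" for n
  have "(\<lambda>n. f' (2 * n)) sums a" "\<And>n. n \<notin> range (\<lambda>n. 2 * n) \<Longrightarrow> f' n = 0"
    using assms(1) by (auto simp: f'_def elim!: evenE)
  then have "f' sums a"
    using sums_mono_reindex[of "\<lambda>n. 2 * n" f' a] by (simp add: strict_mono_def)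
  have "(\<lambda>n. g' (2 * n + 1)) sums b" "\<And>n. n \<notin> range (\<lambda>n. 2 * n + 1) \<Longrightarrow> g' n = 0"
    using assms(2) by (auto simp: g'_def elim!: oddE)
  then have "g' sums b"
    using sums_mono_reindex[of "\<lambda>n. 2 * n + 1" g' b] by (simp add: strict_mono_def)
  with \<open>f' sums a\<close> have "(\<lambda>n. f' n + g' n) sums (a + b)"
    by (rule sums_add)
  then show ?thesis
    by (simp add: f'_def g'_def if_distrib cong: if_cong)
qed

lemma mixed_memory_add:
  assumes "mixed_memory A" and "mixed_memory B"
  shows "mixed_memory (\<lambda>m m'. A m m' + B m m')"
proof -
  obtain \<psi> \<phi> where \<psi>: "mixed_decomp \<psi> A" and \<phi>: "mixed_decomp \<phi> B"
    using assms by (auto simp: mixed_memory_def)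
  define \<xi> where "\<xi> n = (if even n then \<psi> (n div 2) else \<phi> (n div 2))" for n
  have "(\<lambda>n. l2norm_sq (\<xi> n)) sums ((\<Sum>i. l2norm_sq (\<psi> i)) + (\<Sum>i. l2norm_sq (\<phi> i)))"
    using \<psi> \<phi> sums_interleave[OF summable_sums summable_sums, of "\<lambda>i. l2norm_sq (\<psi> i)" "\<lambda>i. l2norm_sq (\<phi> i)"]
    by (simp add: \<xi>_def mixed_decomp_def if_distrib cong: if_cong)
  moreover have "(\<lambda>n. \<xi> n m * cnj (\<xi> n m')) sums (A m m' + B m m')" for m m'
  proof -
    have "(\<lambda>n. \<xi> n m * cnj (\<xi> n m')) =
      (\<lambda>n. if even n then \<psi> (n div 2) m * cnj (\<psi> (n div 2) m') else \<phi> (n div 2) m * cnj (\<phi> (n div 2) m'))"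
      by (simp add: \<xi>_def fun_eq_iff)
    then show ?thesis
      using \<psi> \<phi> sums_interleave[of "\<lambda>i. \<psi> i m * cnj (\<psi> i m')" "A m m'" "\<lambda>i. \<phi> i m * cnj (\<phi> i m')" "B m m'"]
      by (simp add: mixed_decomp_def)
  qed
  ultimately have "mixed_decomp \<xi> (\<lambda>m m'. A m m' + B m m')"
    using \<psi> \<phi> by (auto simp: mixed_decomp_def \<xi>_def sums_summable)
  then show ?thesis by (auto simp: mixed_memory_def)
qed

lemma mixed_memory_sum:
  "finite S \<Longrightarrow> (\<And>q. q \<in> S \<Longrightarrow> mixed_memory (A q)) \<Longrightarrow> mixed_memory (\<lambda>m m'. \<Sum>q\<in>S. A q m m')"
  by (induction S rule: finite_induct) (simp_all add: mixed_memory_zero mixed_memory_add)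

lemma tensor_mat_apply: "tensor_mat A B p p' = A (fst p) (fst p') * B (snd p) (snd p')"
  by (simp add: tensor_mat_def split: prod.split)

lemma mixed_memory_tensor_pure:
  fixes v :: "'a::finite qvec"
  assumes "mixed_memory \<sigma>"
  shows "mixed_memory (tensor_mat (\<lambda>a a'. v a * cnj (v a')) \<sigma>)"
proof -
  obtain \<phi> where \<phi>: "mixed_decomp \<phi> \<sigma>"
    using assms by (auto simp: mixed_memory_def)
  define \<psi> where "\<psi> i p = v (fst p) * \<phi> i (snd p)" for i p
  define N where "N = (\<Sum>a\<in>UNIV. (cmod (v a))\<^sup>2)"
  have norm: "((\<lambda>p. (cmod (\<psi> i p))\<^sup>2) has_sum N * l2norm_sq (\<phi> i)) UNIV" for i
  proof -
    let ?f = "\<lambda>p. (cmod (\<psi> i p))\<^sup>2"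
    have inner: "((\<lambda>c. ?f (a, c)) has_sum (cmod (v a))\<^sup>2 * l2norm_sq (\<phi> i)) UNIV" for a
      using \<phi> unfolding mixed_decomp_def is_l2_def l2norm_sq_def
      by (auto simp: \<psi>_def norm_mult power_mult_distrib intro: has_sum_cmult_right)
    have outer: "((\<lambda>a. (cmod (v a))\<^sup>2 * l2norm_sq (\<phi> i)) has_sum N * l2norm_sq (\<phi> i)) UNIV"
      by (simp add: N_def sum_distrib_right)
    have "?f summable_on UNIV \<times> UNIV"
      by (rule summable_on_SigmaI[OF inner]) simp_all
    then have "(?f has_sum N * l2norm_sq (\<phi> i)) (UNIV \<times> UNIV)"
      by (rule has_sum_SigmaI[OF inner outer])
    then show ?thesis
      by (simp only: UNIV_Times_UNIV)
  qed
  have "mixed_decomp \<psi> (tensor_mat (\<lambda>a a'. v a * cnj (v a')) \<sigma>)"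
    unfolding mixed_decomp_def
  proof (intro conjI allI)
    show "is_l2 (\<psi> i)" for i
      using norm by (auto simp: is_l2_def dest: has_sum_imp_summable)
    have "l2norm_sq (\<psi> i) = N * l2norm_sq (\<phi> i)" for i
      using norm by (simp add: l2norm_sq_def infsumI)
    then show "summable (\<lambda>i. l2norm_sq (\<psi> i))"
      using \<phi> by (simp add: mixed_decomp_def summable_mult)
    show "(\<lambda>i. \<psi> i p * cnj (\<psi> i p')) sums tensor_mat (\<lambda>a a'. v a * cnj (v a')) \<sigma> p p'" for p p'
      using \<phi> sums_mult[of "\<lambda>i. \<phi> i (snd p) * cnj (\<phi> i (snd p'))" "\<sigma> (snd p) (snd p')"
          "v (fst p) * cnj (v (fst p'))"]
      by (simp add: \<psi>_def tensor_mat_apply mixed_decomp_def mult_ac)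
  qed
  then show ?thesis by (auto simp: mixed_memory_def)
qed

lemma separable_mm_tensor:
  assumes "mixed_memory A" and "mixed_memory B"
  shows "separable_mm (tensor_mat A B)"
proof -
  define A' :: "nat \<Rightarrow> _" where "A' i = (if i = 0 then A else (\<lambda>_ _. 0))" for i
  define B' :: "nat \<Rightarrow> _" where "B' i = (if i = 0 then B else (\<lambda>_ _. 0))" for i
  have "mixed_memory (A' i) \<and> mixed_memory (B' i)" for i
    using assms by (simp add: A'_def B'_def mixed_memory_zero)
  moreover have "(\<lambda>i. tensor_mat (A' i) (B' i) m m') sums tensor_mat A B m m'" for m m'
    using sums_finite[of "{0}" "\<lambda>i. tensor_mat (A' i) (B' i) m m'"]
    by (simp add: A'_def B'_def tensor_mat_apply)
  ultimately show ?thesis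
    unfolding separable_mm_def by blast
qed

section \<open>Coordinate relations on supports\<close>

lemma sums_cmod_sq_zero:
  assumes "(\<lambda>i. a i * cnj (a i)) sums 0"
  shows "a i = 0"
proof -
  have "(\<lambda>i. complex_of_real ((cmod (a i))\<^sup>2)) sums complex_of_real 0"
    using assms by (simp only: complex_norm_square of_real_0)
  then have "(\<lambda>i. (cmod (a i))\<^sup>2) sums 0"
    by (simp only: sums_of_real_iff)
  then have "(cmod (a i))\<^sup>2 = 0"
    using suminf_eq_zero_iff[of "\<lambda>i. (cmod (a i))\<^sup>2"] by (simp add: sums_iff)
  then show ?thesis by simp
qed

text \<open>The hypothesis says that the sum over i of the squares of cmod (\<psi> i a - k * \<psi> i b) vanishes.\<close>
lemma mixed_decomp_coord_relation:
  assumes "mixed_decomp \<psi> \<rho>" and "\<rho> a a - cnj k * \<rho> a b - k * \<rho> b a + k * cnj k * \<rho> b b = 0"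
  shows "\<psi> i a = k * \<psi> i b"
proof -
  have sums: "(\<lambda>i. \<psi> i m * cnj (\<psi> i m')) sums \<rho> m m'" for m m'
    using assms(1) by (simp add: mixed_decomp_def)
  have "(\<lambda>i. \<psi> i a * cnj (\<psi> i a) - cnj k * (\<psi> i a * cnj (\<psi> i b)) - k * (\<psi> i b * cnj (\<psi> i a))
      + k * cnj k * (\<psi> i b * cnj (\<psi> i b)))
    sums (\<rho> a a - cnj k * \<rho> a b - k * \<rho> b a + k * cnj k * \<rho> b b)"
    by (intro sums_add sums_diff sums_mult sums)
  then have "(\<lambda>i. (\<psi> i a - k * \<psi> i b) * cnj (\<psi> i a - k * \<psi> i b)) sums 0"
    using assms(2) by (simp add: algebra_simps)
  then show ?thesis
    using sums_cmod_sq_zero by fastforce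
qed

lemma cspan_coord_relation:
  assumes "\<And>s. s \<in> S \<Longrightarrow> s a = k * s b" and "v \<in> cspan S"
  shows "v a = k * v b"
proof -
  obtain F c where "F \<subseteq> S" and v: "v = (\<lambda>m. \<Sum>s\<in>F. c s * s m)"
    using assms(2) unfolding cspan_def by blast
  then have "(\<Sum>s\<in>F. c s * s a) = (\<Sum>s\<in>F. k * (c s * s b))"
    using assms(1) by (intro sum.cong) (auto simp: mult.left_commute)
  then show ?thesis
    by (simp add: v sum_distrib_left)
qed

lemma cspan_is_l2: "(\<And>s. s \<in> S \<Longrightarrow> is_l2 s) \<Longrightarrow> v \<in> cspan S \<Longrightarrow> is_l2 v"
  by (auto simp: cspan_def intro: is_l2_sum)

lemma l2_closure_coord_relation:
  assumes S: "\<And>s. s \<in> S \<Longrightarrow> is_l2 s \<and> s a = k * s b" and "\<phi> \<in> l2_closure S"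
  shows "\<phi> a = k * \<phi> b"
proof (rule ccontr)
  define d where "d = cmod (\<phi> a - k * \<phi> b)"
  assume "\<phi> a \<noteq> k * \<phi> b"
  then have "d > 0" by (simp add: d_def)
  define \<epsilon> where "\<epsilon> = d / (1 + cmod k)"
  have "1 + cmod k > 0"
    by (simp add: add_pos_nonneg)
  then have "\<epsilon> > 0" using \<open>d > 0\<close> by (simp add: \<epsilon>_def)
  then have "\<epsilon>\<^sup>2 > 0" by simp
  then obtain s where "s \<in> S" and close: "l2norm_sq (\<lambda>m. \<phi> m - s m) < \<epsilon>\<^sup>2"
    using assms(2) unfolding l2_closure_def by blast
  have "is_l2 (\<lambda>m. \<phi> m - s m)"
    using assms(2) S[OF \<open>s \<in> S\<close>] by (intro is_l2_diff) (auto simp: l2_closure_def)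
  then have "(cmod (\<phi> m - s m))\<^sup>2 < \<epsilon>\<^sup>2" for m
    using l2norm_sq_ge_coord[of "\<lambda>m. \<phi> m - s m" m] close by simp
  then have near: "cmod (\<phi> m - s m) < \<epsilon>" for m
    using \<open>\<epsilon> > 0\<close> power_less_imp_less_base by (metis less_le)
  have "d = cmod ((\<phi> a - s a) - k * (\<phi> b - s b))"
    using S[OF \<open>s \<in> S\<close>] by (simp add: d_def algebra_simps)
  also have "\<dots> \<le> cmod (\<phi> a - s a) + cmod k * cmod (\<phi> b - s b)"
    using norm_triangle_ineq4 by (metis norm_mult)
  also have "\<dots> < \<epsilon> + cmod k * \<epsilon>"
    using near[of a] mult_left_mono[OF less_imp_le[OF near[of b]], of "cmod k"] by simp
  also have "\<dots> = (1 + cmod k) * \<epsilon>"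
    by (simp add: algebra_simps)
  also have "\<dots> = d"
    using \<open>1 + cmod k > 0\<close> by (simp add: \<epsilon>_def)
  finally show False by simp
qed

lemma qsupp_is_l2: "\<phi> \<in> qsupp \<rho> \<Longrightarrow> is_l2 \<phi>"
  by (simp add: qsupp_def l2_closure_def)

lemma qsupp_coord_relation:
  assumes "mixed_memory \<rho>" and "\<rho> a a - cnj k * \<rho> a b - k * \<rho> b a + k * cnj k * \<rho> b b = 0"
    and "\<phi> \<in> qsupp \<rho>"
  shows "\<phi> a = k * \<phi> b"
proof -
  let ?\<psi> = "SOME \<psi>. mixed_decomp \<psi> \<rho>"
  have decomp: "mixed_decomp ?\<psi> \<rho>"
    using assms(1) unfolding mixed_memory_def by (rule someI_ex)
  have "\<And>i. is_l2 (?\<psi> i)"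
    using decomp by (simp add: mixed_decomp_def)
  then have "is_l2 s \<and> s a = k * s b" if "s \<in> cspan (range ?\<psi>)" for s
    using that mixed_decomp_coord_relation[OF decomp assms(2)]
      cspan_is_l2[of "range ?\<psi>" s] cspan_coord_relation[of "range ?\<psi>" a k b s]
    by blast
  then show ?thesis
    using assms(3) unfolding qsupp_def by (rule l2_closure_coord_relation)
qed

section \<open>The Bell extension of the output\<close>

lemma mixed_memory_trace_out_xyw:
  assumes "mixed_memory \<rho>"
  shows "mixed_memory (trace_out_xyw \<rho>)"
proof -
  have trace_eq: "trace_out_xyw \<rho> = (\<lambda>r r'. \<Sum>y\<in>UNIV. \<Sum>b\<in>UNIV. \<Sum>a\<in>UNIV. \<rho> (a, y, b, r) (a, y, b, r'))"
    by (simp add: fun_eq_iff trace_out_xyw_def trace_out_xw_def)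
  have "mixed_memory (\<lambda>r r'. \<rho> (a, y, b, r) (a, y, b, r'))" for a y b
    using assms by (rule mixed_memory_pullback) (simp add: inj_def)
  then have "mixed_memory (\<lambda>r r'. \<Sum>y\<in>UNIV. \<Sum>b\<in>UNIV. \<Sum>a\<in>UNIV. \<rho> (a, y, b, r) (a, y, b, r'))"
    by (intro mixed_memory_sum) simp_all
  then show ?thesis
    by (simp only: trace_eq)
qed

definition bell_ket :: "(bool \<times> bool) \<times> bool \<times> (bool \<times> bool) \<times> bool \<Rightarrow> complex" where
  "bell_ket = (\<lambda>(x, y, w, e). if x = zero2 \<and> w = zero2 then bell y e else 0)"

definition ghost_state :: "'r mem qmat \<Rightarrow> ('r mem \<times> bool) qmat" where
  "ghost_state \<rho> = (\<lambda>((x, y, w, r), e) ((x', y', w', r'), e').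
    bell_ket (x, y, w, e) * cnj (bell_ket (x', y', w', e')) * trace_out_xyw \<rho> r r')"

lemma mixed_memory_ghost_state:
  fixes \<rho> :: "'r mem qmat"
  assumes "mixed_memory \<rho>"
  shows "mixed_memory (ghost_state \<rho>)"
proof -
  define regroup :: "'r mem \<times> bool \<Rightarrow> ((bool \<times> bool) \<times> bool \<times> (bool \<times> bool) \<times> bool) \<times> 'r" where
    "regroup = (\<lambda>((x, y, w, r), e). ((x, y, w, e), r))"
  have "inj regroup"
    by (rule injI) (auto simp: regroup_def split: prod.splits)
  then have "mixed_memory (\<lambda>p p'.
    tensor_mat (\<lambda>a a'. bell_ket a * cnj (bell_ket a')) (trace_out_xyw \<rho>) (regroup p) (regroup p'))"
    by (rule mixed_memory_pullback[OF mixed_memory_tensor_pure[OF mixed_memory_trace_out_xyw[OF assms]]])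
  also have "(\<lambda>p p'.
    tensor_mat (\<lambda>a a'. bell_ket a * cnj (bell_ket a')) (trace_out_xyw \<rho>) (regroup p) (regroup p')) = ghost_state \<rho>"
    by (simp add: fun_eq_iff regroup_def ghost_state_def tensor_mat_def split: prod.split)
  finally show ?thesis .
qed

lemma cnj_bell [simp]: "cnj (bell y e) = bell y e"
  by (simp add: bell_def)

lemma bell_mult_bell: "bell y e * bell y' e = (if y = e \<and> y' = e then 1/2 else 0)"
proof -
  have "complex_of_real (1 / sqrt 2) * complex_of_real (1 / sqrt 2) = 1/2"
    by (simp flip: of_real_mult)
  then show ?thesis by (simp add: bell_def)
qed

lemma ptrace_ghost_state:
  fixes \<rho> :: "'r mem qmat"
  shows "ptrace (ghost_state \<rho>) = (\<lambda>(x, y, w, r) (x', y', w', r').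
    if x = zero2 \<and> x' = zero2 \<and> w = zero2 \<and> w' = zero2 \<and> y = y' then 1/2 * trace_out_xyw \<rho> r r' else 0)"
proof (intro ext)
  fix m m' :: "'r mem"
  show "ptrace (ghost_state \<rho>) m m' = (\<lambda>(x, y, w, r) (x', y', w', r').
    if x = zero2 \<and> x' = zero2 \<and> w = zero2 \<and> w' = zero2 \<and> y = y' then 1/2 * trace_out_xyw \<rho> r r' else 0) m m'"
    by (cases m rule: prod_cases4, cases m' rule: prod_cases4)
      (simp add: ptrace_def ghost_state_def bell_ket_def sum_UNIV_bool bell_mult_bell)
qed

lemma ptrace_tensor_unit: "ptrace (tensor_mat A (\<lambda>(_::unit) _. 1)) = A"
  by (simp add: ptrace_def tensor_mat_def)

lemma mixed_memory_tensor_unit: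
  assumes "mixed_memory A"
  shows "mixed_memory (tensor_mat A (\<lambda>(_::unit) _. 1))"
proof -
  have "inj (fst :: 'a \<times> unit \<Rightarrow> 'a)"
    by (auto simp: inj_def)
  then show ?thesis
    using mixed_memory_pullback[OF assms] by (simp add: tensor_mat_def case_prod_beta')
qed

lemma mixed_memory_unit: "mixed_memory (\<lambda>(_::unit) _. 1)"
  using mixed_memory_proj[OF is_l2_finite, of "\<lambda>_. 1"] by simp

lemma uniform_yI:
  fixes \<phi> :: "(('r mem \<times> bool) \<times> unit) qvec"
  assumes "is_l2 \<phi>"
    and vanish: "\<And>x y w r e u. y \<noteq> e \<Longrightarrow> \<phi> (((x, y, w, r), e), u) = 0"
    and symm: "\<And>x w r u. \<phi> (((x, False, w, r), False), u) = \<phi> (((x, True, w, r), True), u)"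
  shows "\<phi> \<in> uniform_y"
proof -
  define diag :: "(bool \<times> bool) \<times> (bool \<times> bool) \<times> 'r \<times> unit \<Rightarrow> ('r mem \<times> bool) \<times> unit" where
    "diag = (\<lambda>(x, w, r, u). (((x, False, w, r), False), u))"
  define ch where "ch = (\<lambda>k. complex_of_real (sqrt 2) * \<phi> (diag k))"
  have "inj diag"
    by (auto simp: inj_def diag_def)
  then have "is_l2 ch"
    unfolding ch_def using is_l2_scale[OF is_l2_comp_inj(1)[OF assms(1)]] by (simp add: comp_def)
  moreover have "\<phi> (((x, y, w, r), e), u) = bell y e * ch (x, w, r, u)" for x y w r e u
  proof (cases "y = e")
    case True
    have "complex_of_real (1 / sqrt 2) * complex_of_real (sqrt 2) = 1"
      by (simp flip: of_real_mult)
    with True symm[of x w r u] show ?thesis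
      by (cases e) (simp_all add: bell_def ch_def diag_def mult.assoc[symmetric])
  qed (simp add: vanish bell_def)
  ultimately show ?thesis
    unfolding uniform_y_def by blast
qed

lemma qsupp_ghost_state_tensor_unit:
  assumes "mixed_memory \<rho>"
  shows "qsupp (tensor_mat (ghost_state \<rho>) (\<lambda>(_::unit) _. 1)) \<subseteq> uniform_y"
proof
  fix \<phi> assume \<phi>: "\<phi> \<in> qsupp (tensor_mat (ghost_state \<rho>) (\<lambda>(_::unit) _. 1))"
  note relation = qsupp_coord_relation[OF mixed_memory_tensor_unit[OF mixed_memory_ghost_state[OF assms]] _ \<phi>]
  show "\<phi> \<in> uniform_y"
  proof (rule uniform_yI)
    show "is_l2 \<phi>"
      using \<phi> by (rule qsupp_is_l2)
    show "\<phi> (((x, y, w, r), e), u) = 0" if "y \<noteq> e" for x y w r e u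
      using relation[where k=0] that by (simp add: tensor_mat_def ghost_state_def bell_ket_def bell_def)
    show "\<phi> (((x, False, w, r), False), u) = \<phi> (((x, True, w, r), True), u)" for x w r u
      using relation[where k=1] by (simp add: tensor_mat_def ghost_state_def bell_ket_def bell_def)
  qed
qed

theorem mainTheorem1:
  fixes UK U0 :: "(bool \<times> bool) qmat" and \<rho> :: "'r mem qmat"
  assumes "isometry_mat UK" and "\<forall>k. UK k (False, False) = 1 / 2"
    and "isometry_mat U0" and "\<forall>k. U0 k (False, False) = (if k = (False, False) then 1 else 0)"
    and "mixed_memory \<rho>"
  shows "sat ((Keygen UK U0 ;; Enc ;; Erase U0) \<rho>) (uniform_y :: ((('r mem \<times> bool) \<times> unit) qvec) set)"
proof -
  \<comment> \<open>Only the first columns of U_K and U_0 enter.\<close>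
  have UK: "\<And>k. UK k zero2 = 1/2" and U0: "\<And>k. U0 k zero2 = (if k = zero2 then 1 else 0)"
    using assms(2,4) unfolding zero2_def by blast+
  let ?witness = "tensor_mat (ghost_state \<rho>) (\<lambda>(_::unit) _. 1)"
  have "mixed_memory ?witness"
    using assms(5) by (intro mixed_memory_tensor_unit mixed_memory_ghost_state)
  moreover have "separable_mm ?witness"
    using assms(5) by (intro separable_mm_tensor mixed_memory_ghost_state mixed_memory_unit)
  moreover have "ptrace (ptrace ?witness) = (Keygen UK U0 ;; Enc ;; Erase U0) \<rho>"
    by (simp add: ptrace_tensor_unit ptrace_ghost_state program_output[of UK U0, OF UK U0])
  ultimately show ?thesis
    unfolding sat_def using qsupp_ghost_state_tensor_unit[OF assms(5)] by blast
qed

end
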